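(* For every rooted tree $T$, \[\mathcal{P}(T;x,y)=L(T;x,y):=\sum_{A\in\mathcal{A}(T)}x^{\ell(A)}y^{s(A)}.\]
   Context: For a rooted tree $T$ with root $r$, the branches $T_1,\dots,T_k$ are the subtrees obtained by deleting $r$, each rooted at the neighbour of $r$ it contains; $|T|$ is the number of vertices. The polynomial $\mathcal{P}(T;x,y)$ is defined recursively by $\mathcal{P}(T;x,y)=x$ if $T$ has a single vertex, and otherwise $\mathcal{P}(T;x,y)=\prod_{i=1}^k\mathcal{P}(T_i;x,y)+y^{|T|-1}$. An antichain in $T$ is a set of vertices no two of which lie on a common path starting at the root (i.e. no one is an ancestor of another); a maximal antichain is an antichain not properly contained in another antichain; $\mathcal{A}(T)$ is the set of maximal antichains of $T$. A leaf is a vertex with no children (so the root of a one-vertex tree is a leaf). For $A\in\mathcal{A}(T)$, $\ell(A)$ is the number of leaves in $A$, and $s(A)=\sum_{a\in A}(|T_a|-1)$, where $T_a$ is the subtree consisting of $a$ and all its descendants. *)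

theory Defs
  imports Main "HOL-Library.Sublist"
begin

text \<open>Rooted trees as rose trees: a node together with the list of its branches.
  Vertices are addressed by positions (paths of child indices from the root).\<close>

datatype rtree = Node "rtree list"

fun children :: "rtree \<Rightarrow> rtree list" where
  "children (Node ts) = ts"

fun tsize :: "rtree \<Rightarrow> nat" where
  "tsize (Node ts) = Suc (sum_list (map tsize ts))"

fun Ppoly :: "rtree \<Rightarrow> 'a::comm_ring_1 \<Rightarrow> 'a \<Rightarrow> 'a" where
  "Ppoly (Node ts) x y =
     (if ts = [] then x
      else prod_list (map (\<lambda>t. Ppoly t x y) ts) + y ^ (tsize (Node ts) - 1))"

fun valid_pos :: "rtree \<Rightarrow> nat list \<Rightarrow> bool" where
  "valid_pos t [] = True"
| "valid_pos (Node ts) (i # p) = (i < length ts \<and> valid_pos (ts ! i) p)"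

definition positions :: "rtree \<Rightarrow> nat list set" where
  "positions t = {p. valid_pos t p}"

fun subtree_at :: "rtree \<Rightarrow> nat list \<Rightarrow> rtree" where
  "subtree_at t [] = t"
| "subtree_at (Node ts) (i # p) = (if i < length ts then subtree_at (ts ! i) p else Node [])"

definition is_leaf :: "rtree \<Rightarrow> nat list \<Rightarrow> bool" where
  "is_leaf t a \<longleftrightarrow> children (subtree_at t a) = []"

text \<open>A vertex a is an ancestor-or-equal of b iff the position of a is a prefix of that of b.\<close>
definition antichain :: "rtree \<Rightarrow> nat list set \<Rightarrow> bool" where
  "antichain t A \<longleftrightarrow> A \<subseteq> positions t \<and>
     (\<forall>a\<in>A. \<forall>b\<in>A. a \<noteq> b \<longrightarrow> \<not> prefix a b)"

definition max_antichains :: "rtree \<Rightarrow> nat list set set" where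
  "max_antichains t = {A. antichain t A \<and> \<not> (\<exists>B. antichain t B \<and> A \<subset> B)}"

definition leafcount :: "rtree \<Rightarrow> nat list set \<Rightarrow> nat" where
  "leafcount t A = card {a\<in>A. is_leaf t a}"

definition sval :: "rtree \<Rightarrow> nat list set \<Rightarrow> nat" where
  "sval t A = (\<Sum>a\<in>A. tsize (subtree_at t a) - 1)"

definition Lpoly :: "rtree \<Rightarrow> 'a::comm_ring_1 \<Rightarrow> 'a \<Rightarrow> 'a" where
  "Lpoly t x y = (\<Sum>A\<in>max_antichains t. x ^ leafcount t A * y ^ sval t A)"

end

theory Submission
  imports Defs "HOL-Library.FuncSet"
begin

text \<open>A maximal antichain of a tree with branches \<open>T\<^sub>1, \<dots>, T\<^sub>k\<close> (\<open>k \<ge> 1\<close>) is either the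
  root alone, or the disjoint union of one maximal antichain of each branch, and every choice of
  branch antichains arises exactly once. The root antichain contributes \<open>y^(|T| - 1)\<close>, since the
  root is not a leaf; for the others, the leaf count and \<open>s\<close> are additive over the branches,
  so their total weight factors as \<open>\<Prod>\<^sub>i L(T\<^sub>i)\<close>. Thus \<open>L\<close> obeys the recursion defining \<open>\<P>\<close>.\<close>

lemma positions_Node:
  "positions (Node ts) = insert [] (\<Union>i<length ts. (#) i ` positions (ts ! i))"
proof (rule set_eqI)
  show "p \<in> positions (Node ts) \<longleftrightarrow> p \<in> insert [] (\<Union>i<length ts. (#) i ` positions (ts ! i))" for p
    by (cases p) (auto simp: positions_def)
qed

lemma Nil_in_positions [simp]: "[] \<in> positions t"
  by (simp add: positions_def)

lemma Cons_in_positions_Node [simp]: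
  "i # p \<in> positions (Node ts) \<longleftrightarrow> i < length ts \<and> p \<in> positions (ts ! i)"
  by (simp add: positions_def)

lemma finite_positions: "finite (positions t)"
  by (induction t) (auto simp: positions_Node)

lemma max_antichains_iff:
  "A \<in> max_antichains t \<longleftrightarrow>
     A \<subseteq> positions t \<and> (\<forall>a\<in>A. \<forall>b\<in>A. a \<noteq> b \<longrightarrow> \<not> prefix a b) \<and>
     (\<forall>p\<in>positions t. \<exists>a\<in>A. prefix a p \<or> prefix p a)"
  (is "_ \<longleftrightarrow> _ \<and> _ \<and> ?covers")
proof -
  have "A \<in> max_antichains t \<longleftrightarrow> antichain t A \<and> ?covers"
  proof
    assume A: "A \<in> max_antichains t"
    then have "antichain t A" by (simp add: max_antichains_def)
    moreover have ?covers
    proof (rule ballI, rule ccontr)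
      fix p assume "p \<in> positions t" and "\<not> (\<exists>a\<in>A. prefix a p \<or> prefix p a)"
      with \<open>antichain t A\<close> have "antichain t (insert p A)" and "A \<subset> insert p A"
        by (auto simp: antichain_def)
      with A show False by (auto simp: max_antichains_def)
    qed
    ultimately show "antichain t A \<and> ?covers" ..
  next
    assume "antichain t A \<and> ?covers"
    then have A: "antichain t A" and cov: ?covers by auto
    have "\<not> A \<subset> B" if B: "antichain t B" for B
    proof
      assume "A \<subset> B"
      then obtain b where "b \<in> B" "b \<notin> A" by blast
      with B have "b \<in> positions t" by (auto simp: antichain_def)
      with cov obtain a where a: "a \<in> A" "prefix a b \<or> prefix b a" by blast
      with \<open>A \<subset> B\<close> \<open>b \<notin> A\<close> have "a \<in> B" "a \<noteq> b" by auto
      with B \<open>b \<in> B\<close> a(2) show False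
        unfolding antichain_def by metis
    qed
    with A show "A \<in> max_antichains t" by (auto simp: max_antichains_def)
  qed
  then show ?thesis by (simp add: antichain_def)
qed

lemma max_antichain_subset_positions: "A \<in> max_antichains t \<Longrightarrow> A \<subseteq> positions t"
  by (simp add: max_antichains_iff)

lemma max_antichain_incomparable:
  "A \<in> max_antichains t \<Longrightarrow> a \<in> A \<Longrightarrow> b \<in> A \<Longrightarrow> a \<noteq> b \<Longrightarrow> \<not> prefix a b"
  by (simp add: max_antichains_iff)

lemma max_antichain_covers:
  "A \<in> max_antichains t \<Longrightarrow> p \<in> positions t \<Longrightarrow> \<exists>a\<in>A. prefix a p \<or> prefix p a"
  by (simp add: max_antichains_iff)

lemma finite_max_antichains: "finite (max_antichains t)"
proof (rule finite_subset)
  show "max_antichains t \<subseteq> Pow (positions t)"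
    by (auto dest: max_antichain_subset_positions)
qed (simp add: finite_positions)

lemma finite_max_antichain: "A \<in> max_antichains t \<Longrightarrow> finite A"
  using max_antichain_subset_positions finite_positions finite_subset by blast

lemma root_in_max_antichains: "{[]} \<in> max_antichains t"
  by (simp add: max_antichains_iff)

lemma max_antichain_containing_root:
  assumes "A \<in> max_antichains t" "[] \<in> A"
  shows "A = {[]}"
  using max_antichain_incomparable [OF assms(1) assms(2)] assms(2) by auto

lemma max_antichain_nonempty: "A \<in> max_antichains t \<Longrightarrow> A \<noteq> {}"
  using max_antichain_covers [of A t "[]"] by auto

lemma max_antichains_leaf: "max_antichains (Node []) = {{[]}}"
proof -
  have "A = {[]}" if "A \<in> max_antichains (Node [])" for A
    using max_antichain_subset_positions [OF that] max_antichain_nonempty [OF that]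
    by (auto simp: positions_Node)
  then show ?thesis using root_in_max_antichains by blast
qed

definition graft :: "nat \<Rightarrow> (nat \<Rightarrow> nat list set) \<Rightarrow> nat list set" where
  "graft n F = (\<Union>i<n. (#) i ` F i)"

definition branch_part :: "nat \<Rightarrow> nat list set \<Rightarrow> nat list set" where
  "branch_part i A = {p. i # p \<in> A}"

lemma Cons_in_graft [simp]: "i # p \<in> graft n F \<longleftrightarrow> i < n \<and> p \<in> F i"
  by (auto simp: graft_def)

lemma Nil_notin_graft [simp]: "[] \<notin> graft n F"
  by (auto simp: graft_def)

lemma branch_part_graft: "i < n \<Longrightarrow> branch_part i (graft n F) = F i"
  by (simp add: branch_part_def)

lemma inj_on_graft: "inj_on (graft n) (PiE {..<n} M)"
proof (rule inj_onI)
  fix F G assume F: "F \<in> PiE {..<n} M" and G: "G \<in> PiE {..<n} M" and "graft n F = graft n G"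
  then have "F i = G i" if "i < n" for i
    using that by (metis branch_part_graft)
  then show "F = G" by (intro PiE_ext [OF F G]) auto
qed

lemma graft_in_max_antichains:
  assumes Fi: "\<And>i. i < length ts \<Longrightarrow> F i \<in> max_antichains (ts ! i)" and "ts \<noteq> []"
  shows "graft (length ts) F \<in> max_antichains (Node ts)"
  unfolding max_antichains_iff
proof (intro conjI ballI impI)
  show "graft (length ts) F \<subseteq> positions (Node ts)"
  proof
    fix a assume "a \<in> graft (length ts) F"
    then obtain i p where "a = i # p" "i < length ts" "p \<in> F i" by (auto simp: graft_def)
    then show "a \<in> positions (Node ts)"
      using max_antichain_subset_positions [OF Fi] by auto
  qed
  fix a b assume "a \<in> graft (length ts) F" "b \<in> graft (length ts) F" "a \<noteq> b"
  then obtain i p j q where a: "a = i # p" "i < length ts" "p \<in> F i"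
    and b: "b = j # q" "j < length ts" "q \<in> F j"
    by (auto simp: graft_def)
  show "\<not> prefix a b"
  proof
    assume "prefix a b"
    with a b have "i = j" "prefix p q" by simp_all
    with a b \<open>a \<noteq> b\<close> show False
      using max_antichain_incomparable [OF Fi] by blast
  qed
next
  fix p assume p: "p \<in> positions (Node ts)"
  show "\<exists>a\<in>graft (length ts) F. prefix a p \<or> prefix p a"
  proof (cases p)
    case Nil
    from \<open>ts \<noteq> []\<close> have "0 < length ts" by simp
    then obtain a where "a \<in> F 0"
      using max_antichain_nonempty [OF Fi] by blast
    with \<open>0 < length ts\<close> Nil show ?thesis by (intro bexI [of _ "0 # a"]) simp_all
  next
    case (Cons i q)
    with p have "i < length ts" "q \<in> positions (ts ! i)" by simp_all
    then obtain a where "a \<in> F i" "prefix a q \<or> prefix q a"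
      using max_antichain_covers [OF Fi] by blast
    with \<open>i < length ts\<close> Cons show ?thesis by (intro bexI [of _ "i # a"]) simp_all
  qed
qed

lemma branch_part_in_max_antichains:
  assumes A: "A \<in> max_antichains (Node ts)" and "[] \<notin> A" and "i < length ts"
  shows "branch_part i A \<in> max_antichains (ts ! i)"
  unfolding max_antichains_iff
proof (intro conjI ballI impI)
  show "branch_part i A \<subseteq> positions (ts ! i)"
    using max_antichain_subset_positions [OF A] by (auto simp: branch_part_def)
  fix a b assume "a \<in> branch_part i A" "b \<in> branch_part i A" "a \<noteq> b"
  then show "\<not> prefix a b"
    using max_antichain_incomparable [OF A, of "i # a" "i # b"] by (simp add: branch_part_def)
next
  fix q assume "q \<in> positions (ts ! i)"
  with \<open>i < length ts\<close> obtain a where a: "a \<in> A" "prefix a (i # q) \<or> prefix (i # q) a"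
    using max_antichain_covers [OF A, of "i # q"] by auto
  with \<open>[] \<notin> A\<close> obtain r where "a = i # r" by (cases a) auto
  with a show "\<exists>a\<in>branch_part i A. prefix a q \<or> prefix q a"
    by (auto simp: branch_part_def)
qed

lemma max_antichain_eq_graft:
  assumes A: "A \<in> max_antichains (Node ts)" and "[] \<notin> A"
  shows "A = graft (length ts) (\<lambda>i\<in>{..<length ts}. branch_part i A)"
proof (rule set_eqI)
  fix a
  have "i < length ts" if "i # p \<in> A" for i p
    using that max_antichain_subset_positions [OF A] by auto
  with \<open>[] \<notin> A\<close> show "a \<in> A \<longleftrightarrow> a \<in> graft (length ts) (\<lambda>i\<in>{..<length ts}. branch_part i A)"
    by (cases a) (auto simp: branch_part_def)
qed

lemma max_antichains_Node:
  assumes "ts \<noteq> []"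
  shows "max_antichains (Node ts) =
    insert {[]} (graft (length ts) ` PiE {..<length ts} (\<lambda>i. max_antichains (ts ! i)))"
proof (intro set_eqI iffI)
  fix A assume A: "A \<in> max_antichains (Node ts)"
  show "A \<in> insert {[]} (graft (length ts) ` PiE {..<length ts} (\<lambda>i. max_antichains (ts ! i)))"
  proof (cases "[] \<in> A")
    case True
    then show ?thesis using max_antichain_containing_root [OF A] by simp
  next
    case False
    then have "(\<lambda>i\<in>{..<length ts}. branch_part i A) \<in> PiE {..<length ts} (\<lambda>i. max_antichains (ts ! i))"
      using branch_part_in_max_antichains [OF A] by (simp add: restrict_PiE_iff)
    with max_antichain_eq_graft [OF A False] show ?thesis by blast
  qed
qed (auto simp: PiE_iff root_in_max_antichains intro: graft_in_max_antichains [OF _ assms])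

lemma sum_graft:
  assumes "\<And>i. i < n \<Longrightarrow> finite (F i)"
  shows "sum g (graft n F) = (\<Sum>i<n. \<Sum>p\<in>F i. g (i # p))"
proof -
  have "sum g (graft n F) = (\<Sum>i<n. sum g ((#) i ` F i))"
    unfolding graft_def by (rule sum.UNION_disjoint) (use assms in auto)
  also have "\<dots> = (\<Sum>i<n. \<Sum>p\<in>F i. g (i # p))"
    by (simp add: sum.reindex)
  finally show ?thesis .
qed

lemma leafcount_eq_sum: "finite A \<Longrightarrow> leafcount t A = (\<Sum>a\<in>A. if is_leaf t a then 1 else 0)"
  unfolding leafcount_def by (simp add: sum.inter_filter [symmetric])

lemma is_leaf_Node_Cons: "i < length ts \<Longrightarrow> is_leaf (Node ts) (i # p) = is_leaf (ts ! i) p"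
  by (simp add: is_leaf_def)

lemma leafcount_graft:
  assumes "\<And>i. i < length ts \<Longrightarrow> finite (F i)"
  shows "leafcount (Node ts) (graft (length ts) F) = (\<Sum>i<length ts. leafcount (ts ! i) (F i))"
proof -
  have "finite (graft (length ts) F)"
    using assms by (simp add: graft_def)
  then show ?thesis
    using assms by (simp add: leafcount_eq_sum sum_graft is_leaf_Node_Cons)
qed

lemma sval_graft:
  assumes "\<And>i. i < length ts \<Longrightarrow> finite (F i)"
  shows "sval (Node ts) (graft (length ts) F) = (\<Sum>i<length ts. sval (ts ! i) (F i))"
  using assms by (simp add: sval_def sum_graft)

lemma leafcount_root: "leafcount t {[]} = (if is_leaf t [] then 1 else 0)"
  by (simp add: leafcount_def Collect_conj_eq Int_absorb1)

lemma Lpoly_leaf: "Lpoly (Node []) x y = x"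
  by (simp add: Lpoly_def max_antichains_leaf leafcount_root is_leaf_def sval_def)

lemma Lpoly_Node:
  fixes x y :: "'a::comm_ring_1"
  assumes "ts \<noteq> []"
  shows "Lpoly (Node ts) x y = (\<Prod>i<length ts. Lpoly (ts ! i) x y) + y ^ (tsize (Node ts) - 1)"
proof -
  let ?n = "length ts" and ?M = "\<lambda>i. max_antichains (ts ! i)"
  let ?w = "\<lambda>t A. x ^ leafcount t A * y ^ sval t A"
  have root_weight: "?w (Node ts) {[]} = y ^ (tsize (Node ts) - 1)"
    using assms by (simp add: leafcount_root is_leaf_def sval_def)
  have graft_weight: "?w (Node ts) (graft ?n F) = (\<Prod>i<?n. ?w (ts ! i) (F i))"
    if "F \<in> PiE {..<?n} ?M" for F
  proof -
    have "\<And>i. i < ?n \<Longrightarrow> finite (F i)"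
      using that finite_max_antichain by (auto simp: PiE_iff)
    then show ?thesis
      by (simp add: leafcount_graft sval_graft power_sum prod.distrib)
  qed
  have "{[]} \<notin> graft ?n ` PiE {..<?n} ?M"
    by (metis Nil_notin_graft imageE singletonI)
  moreover have "finite (PiE {..<?n} ?M)"
    by (simp add: finite_PiE finite_max_antichains)
  ultimately have "Lpoly (Node ts) x y =
      ?w (Node ts) {[]} + (\<Sum>F\<in>PiE {..<?n} ?M. ?w (Node ts) (graft ?n F))"
    by (simp add: Lpoly_def max_antichains_Node [OF assms] sum.reindex [OF inj_on_graft])
  also have "\<dots> = y ^ (tsize (Node ts) - 1) + (\<Sum>F\<in>PiE {..<?n} ?M. \<Prod>i<?n. ?w (ts ! i) (F i))"
    by (simp add: root_weight graft_weight)
  also have "\<dots> = y ^ (tsize (Node ts) - 1) + (\<Prod>i<?n. Lpoly (ts ! i) x y)"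
    by (simp add: prod_sum_PiE finite_max_antichains Lpoly_def)
  finally show ?thesis by (simp add: add.commute)
qed

theorem theorem2p9:
  fixes T :: rtree and x y :: "'a::comm_ring_1"
  shows "Ppoly T x y = Lpoly T x y"
proof (induction T)
  case (Node ts)
  show ?case
  proof (cases "ts = []")
    case True
    then show ?thesis by (simp add: Lpoly_leaf)
  next
    case False
    have "prod_list (map (\<lambda>t. Ppoly t x y) ts) = (\<Prod>i<length ts. Lpoly (ts ! i) x y)"
      using Node by (simp add: prod.list_conv_set_nth atLeast0LessThan)
    with False show ?thesis by (simp add: Lpoly_Node)
  qed
qed

end
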